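(* Let $\mathcal S=(s_\alpha)_{\alpha\in L(\omega_1)}$ be a ladder system on $\omega_1$ and let $K_{\mathcal S}=\omega_1\cup\{\infty\}$ be the associated ladder system space. Let $A$ be a nonstationary subset of $L(\omega_1)$ and let $\xi:A\to L(\omega_1)$ be an injective map. Then $\xi$ extends to a continuous map $\phi:K_{\mathcal S}\to K_{\mathcal S}$ such that $\phi(\infty)=\infty$ and $\phi(\alpha)=\infty$ for every $\alpha\in L(\omega_1)\setminus A$.
   Context: $L(\omega_1)$ denotes the set of limit ordinals in $\omega_1$ (the first uncountable ordinal) and $S(\omega_1)=\omega_1\setminus L(\omega_1)$. A ladder system on $\omega_1$ is a family $\mathcal S=(s_\alpha)_{\alpha\in L(\omega_1)}$ where for each limit $\alpha$, $s_\alpha=\{s^n_\alpha:n\in\omega\}$ and $(s^n_\alpha)_{n\in\omega}$ is a strictly increasing sequence in $S(\omega_1)$ converging (in the order sense) to $\alpha$. The ladder system topology $\tau_{\mathcal S}$ on $\omega_1$ is the topology in which every element of $S(\omega_1)$ is isolated and the basic neighborhoods of a limit ordinal $\alpha$ are the sets $\{\alpha\}\cup B$ with $B$ a cofinite subset of $s_\alpha$. This is a locally compact Hausdorff space, and $K_{\mathcal S}=\omega_1\cup\{\infty\}$ is its one-point compactification. A subset of $\omega_1$ is nonstationary if it is disjoint from some closed unbounded subset of $\omega_1$. *)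

theory Defs
  imports "HOL-Analysis.Analysis"
begin

text \<open>omega_1 is modelled by a well-ordered type whose universe is uncountable
  and all of whose proper initial segments are countable.\<close>
definition omega1_type :: "'a::wellorder itself \<Rightarrow> bool" where
  "omega1_type _ \<longleftrightarrow> uncountable (UNIV :: 'a set) \<and> (\<forall>\<alpha>::'a. countable {\<beta>. \<beta> < \<alpha>})"

definition limit_ord :: "'a::wellorder \<Rightarrow> bool" where
  "limit_ord \<alpha> \<longleftrightarrow> (\<exists>\<beta>. \<beta> < \<alpha>) \<and> (\<forall>\<beta>. \<beta> < \<alpha> \<longrightarrow> (\<exists>\<gamma>. \<beta> < \<gamma> \<and> \<gamma> < \<alpha>))"

definition L_set :: "'a::wellorder set" where
  "L_set = {\<alpha>. limit_ord \<alpha>}"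

definition S_set :: "'a::wellorder set" where
  "S_set = UNIV - L_set"

definition ladder_system :: "('a::wellorder \<Rightarrow> nat \<Rightarrow> 'a) \<Rightarrow> bool" where
  "ladder_system s \<longleftrightarrow> (\<forall>\<alpha>\<in>L_set.
      strict_mono (s \<alpha>) \<and> (\<forall>n. s \<alpha> n \<in> S_set \<and> s \<alpha> n < \<alpha>) \<and>
      (\<forall>\<beta><\<alpha>. \<exists>n. \<beta> < s \<alpha> n))"

text \<open>The ladder system topology: points of S are isolated; basic neighbourhoods
  of a limit alpha are {alpha} together with a cofinite subset of the ladder s_alpha.\<close>
definition ladder_topology :: "('a::wellorder \<Rightarrow> nat \<Rightarrow> 'a) \<Rightarrow> 'a topology" where
  "ladder_topology s = topology (\<lambda>U. \<forall>\<alpha>\<in>U \<inter> L_set. \<exists>N. \<forall>n\<ge>N. s \<alpha> n \<in> U)"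

text \<open>One-point (Alexandroff) compactification, with None playing the role of infinity.\<close>
definition one_point_compactification :: "'a topology \<Rightarrow> 'a option topology" where
  "one_point_compactification X = topology (\<lambda>V.
      V \<subseteq> insert None (Some ` topspace X) \<and>
      ((None \<notin> V \<and> openin X (Some -` V)) \<or>
       (None \<in> V \<and> closedin X (topspace X - Some -` V) \<and> compactin X (topspace X - Some -` V))))"

definition ladder_space :: "('a::wellorder \<Rightarrow> nat \<Rightarrow> 'a) \<Rightarrow> 'a option topology" where
  "ladder_space s = one_point_compactification (ladder_topology s)"

definition club :: "'a::wellorder set \<Rightarrow> bool" where
  "club C \<longleftrightarrow> (\<forall>\<beta>. \<exists>\<gamma>\<in>C. \<beta> \<le> \<gamma>) \<and>
     (\<forall>\<alpha>. limit_ord \<alpha> \<and> (\<forall>\<beta><\<alpha>. \<exists>\<gamma>\<in>C. \<beta> < \<gamma> \<and> \<gamma> < \<alpha>) \<longrightarrow> \<alpha> \<in> C)"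

definition nonstationary :: "'a::wellorder set \<Rightarrow> bool" where
  "nonstationary A \<longleftrightarrow> (\<exists>C. club C \<and> A \<inter> C = {})"

end

theory Submission
  imports Defs
begin

text \<open>Since A misses a club C, every \<alpha> \<in> A has a bound \<delta> \<alpha> < \<alpha> for C below \<alpha>, so the
  tails of the ladders beyond \<delta> lie in the intervals (\<delta> \<alpha>, \<alpha>), and these intervals are
  disjoint for \<alpha>, \<beta> with different least points of C above them. Each of the resulting
  blocks of A is countable, and enumerating it lets every ladder drop the finitely many
  rungs it shares with earlier ones. So A carries pairwise disjoint clopen compact
  neighbourhoods {\<alpha>} \<union> tail(s \<alpha>); the map collapses each of them onto \<xi> \<alpha> and everything
  else onto \<infinity>. It is continuous at \<infinity> because a compact set contains only finitely many
  limit ordinals and \<xi> is injective.\<close>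

lemma one_point_compactification_eq_Alexandroff:
  "one_point_compactification X = Alexandroff_compactification X"
  unfolding one_point_compactification_def Alexandroff_compactification_def
proof (rule arg_cong[where f = topology], rule ext, unfold Alexandroff_open_iff)
  fix V :: "'a option set"
  show "(V \<subseteq> insert None (Some ` topspace X) \<and>
      ((None \<notin> V \<and> openin X (Some -` V)) \<or>
       (None \<in> V \<and> closedin X (topspace X - Some -` V) \<and> compactin X (topspace X - Some -` V))))
    \<longleftrightarrow> (\<exists>U. (V = Some ` U \<and> openin X U) \<or>
       (V = insert None (Some ` (topspace X - U)) \<and> compactin X U \<and> closedin X U))"
  proof (cases "None \<in> V")
    case True
    have "(V \<subseteq> insert None (Some ` topspace X) \<and> closedin X (topspace X - Some -` V)
            \<and> compactin X (topspace X - Some -` V))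
      \<longleftrightarrow> (\<exists>U. V = insert None (Some ` (topspace X - U)) \<and> compactin X U \<and> closedin X U)"
    proof
      assume L: "V \<subseteq> insert None (Some ` topspace X) \<and> closedin X (topspace X - Some -` V)
            \<and> compactin X (topspace X - Some -` V)"
      then have "V = insert None (Some ` (topspace X - (topspace X - Some -` V)))"
        using True by (auto intro: option.exhaust)
      with L show "\<exists>U. V = insert None (Some ` (topspace X - U)) \<and> compactin X U \<and> closedin X U"
        by blast
    next
      assume "\<exists>U. V = insert None (Some ` (topspace X - U)) \<and> compactin X U \<and> closedin X U"
      then obtain U where U: "V = insert None (Some ` (topspace X - U))" "compactin X U" "closedin X U"
        by blast
      moreover have "topspace X - Some -` V = U"
        using U closedin_subset by auto
      ultimately show "V \<subseteq> insert None (Some ` topspace X) \<and> closedin X (topspace X - Some -` V)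
            \<and> compactin X (topspace X - Some -` V)"
        by auto
    qed
    with True show ?thesis by auto
  next
    case False
    have "(V \<subseteq> insert None (Some ` topspace X) \<and> openin X (Some -` V))
      \<longleftrightarrow> (\<exists>U. V = Some ` U \<and> openin X U)"
    proof
      assume "V \<subseteq> insert None (Some ` topspace X) \<and> openin X (Some -` V)"
      moreover have "V = Some ` (Some -` V)"
        using False by (auto simp: image_iff) (metis option.exhaust)
      ultimately show "\<exists>U. V = Some ` U \<and> openin X U" by blast
    next
      assume "\<exists>U. V = Some ` U \<and> openin X U"
      then show "V \<subseteq> insert None (Some ` topspace X) \<and> openin X (Some -` V)"
        using openin_subset by (auto simp: inj_vimage_image_eq)
    qed
    with False show ?thesis by auto
  qed
qed

lemma openin_ladder_topology:
  "openin (ladder_topology s) U \<longleftrightarrow> (\<forall>\<alpha>\<in>U \<inter> L_set. eventually (\<lambda>n. s \<alpha> n \<in> U) sequentially)"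
proof -
  have "istopology (\<lambda>U. \<forall>\<alpha>\<in>U \<inter> L_set. eventually (\<lambda>n. s \<alpha> n \<in> U) sequentially)"
    unfolding istopology_def
  proof (intro conjI allI impI)
    fix \<K> :: "'a set set"
    assume "\<forall>K\<in>\<K>. \<forall>\<alpha>\<in>K \<inter> L_set. eventually (\<lambda>n. s \<alpha> n \<in> K) sequentially"
    then show "\<forall>\<alpha>\<in>\<Union>\<K> \<inter> L_set. eventually (\<lambda>n. s \<alpha> n \<in> \<Union>\<K>) sequentially"
      by (blast intro: eventually_mono)
  qed (auto simp: eventually_conj_iff)
  then show ?thesis
    unfolding ladder_topology_def eventually_sequentially by simp
qed

lemma topspace_ladder_topology [simp]: "topspace (ladder_topology s) = UNIV"
  using openin_subset[of "ladder_topology s" UNIV] by (auto simp: openin_ladder_topology)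

definition ladder_nbhd :: "('a::wellorder \<Rightarrow> nat \<Rightarrow> 'a) \<Rightarrow> 'a \<Rightarrow> nat \<Rightarrow> 'a set" where
  "ladder_nbhd s \<alpha> N = insert \<alpha> (s \<alpha> ` {N..})"

lemma ladder_systemD:
  assumes "ladder_system s" "\<alpha> \<in> L_set"
  shows "strict_mono (s \<alpha>)" "s \<alpha> n \<in> S_set" "s \<alpha> n < \<alpha>" "\<beta> < \<alpha> \<Longrightarrow> \<exists>n. \<beta> < s \<alpha> n"
  using assms unfolding ladder_system_def by auto

lemma ladder_not_in_L_set:
  "ladder_system s \<Longrightarrow> \<alpha> \<in> L_set \<Longrightarrow> s \<alpha> n \<notin> L_set"
  using ladder_systemD(2) unfolding S_set_def by blast

lemma ladder_nbhd_Int_L_set: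
  "ladder_system s \<Longrightarrow> \<alpha> \<in> L_set \<Longrightarrow> ladder_nbhd s \<alpha> N \<inter> L_set = {\<alpha>}"
  unfolding ladder_nbhd_def using ladder_not_in_L_set by fastforce

lemma ladder_eventually_above:
  assumes "ladder_system s" "\<alpha> \<in> L_set" "\<beta> < \<alpha>"
  shows "eventually (\<lambda>n. \<beta> < s \<alpha> n) sequentially"
proof -
  obtain M where "\<beta> < s \<alpha> M"
    using ladder_systemD(4)[OF assms] by blast
  moreover have "s \<alpha> M \<le> s \<alpha> n" if "M \<le> n" for n
    using ladder_systemD(1)[OF assms(1,2)] that by (simp add: strict_mono_less_eq)
  ultimately show ?thesis
    unfolding eventually_sequentially by (meson less_le_trans)
qed

lemma eventually_inj_notin_finite:
  fixes f :: "nat \<Rightarrow> 'a"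
  assumes "inj f" "finite F"
  shows "eventually (\<lambda>n. f n \<notin> F) sequentially"
  using finite_vimageI[OF assms(2,1)] by (simp add: cofinite_eq_sequentially[symmetric] eventually_cofinite vimage_def)

lemma ladder_eventually_avoids:
  assumes ls: "ladder_system s" and \<alpha>: "\<alpha> \<in> L_set" and \<beta>: "\<beta> \<in> L_set" and "\<alpha> \<noteq> \<beta>"
  shows "eventually (\<lambda>n. s \<alpha> n \<notin> range (s \<beta>)) sequentially"
proof (cases "\<alpha> < \<beta>")
  case True
  txt \<open>Only the finitely many rungs of s \<beta> below M can lie below \<alpha>.\<close>
  then obtain M where M: "\<And>m. M \<le> m \<Longrightarrow> \<alpha> < s \<beta> m"
    using ladder_eventually_above[OF ls \<beta>] unfolding eventually_sequentially by blast
  have "eventually (\<lambda>n. s \<alpha> n \<notin> s \<beta> ` {..<M}) sequentially"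
    using ladder_systemD(1)[OF ls \<alpha>] by (intro eventually_inj_notin_finite) (auto intro: strict_mono_imp_inj_on)
  then show ?thesis
  proof (rule eventually_mono)
    fix n assume "s \<alpha> n \<notin> s \<beta> ` {..<M}"
    with M ladder_systemD(3)[OF ls \<alpha>, of n] show "s \<alpha> n \<notin> range (s \<beta>)"
      by (metis imageI lessThan_iff not_le order.asym rangeE)
  qed
next
  case False
  with \<open>\<alpha> \<noteq> \<beta>\<close> have "\<beta> < \<alpha>" by simp
  then have "eventually (\<lambda>n. \<beta> < s \<alpha> n) sequentially"
    by (rule ladder_eventually_above[OF ls \<alpha>])
  then show ?thesis
    by (rule eventually_mono) (use ladder_systemD(3)[OF ls \<beta>] in \<open>auto dest: order.asym\<close>)
qed

lemma limitin_ladder: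
  "\<alpha> \<in> L_set \<Longrightarrow> limitin (ladder_topology s) (s \<alpha>) \<alpha> sequentially"
  by (auto simp: limitin_def openin_ladder_topology)

lemma compactin_ladder_nbhd:
  "\<alpha> \<in> L_set \<Longrightarrow> compactin (ladder_topology s) (ladder_nbhd s \<alpha> N)"
  unfolding ladder_nbhd_def by (rule compactin_sequence_with_limit[OF limitin_ladder]) auto

lemma openin_ladder_nbhd:
  assumes "ladder_system s" "\<alpha> \<in> L_set"
  shows "openin (ladder_topology s) (ladder_nbhd s \<alpha> N)"
  unfolding openin_ladder_topology ladder_nbhd_Int_L_set[OF assms]
  by (auto simp: ladder_nbhd_def eventually_sequentially)

lemma closedin_ladder_nbhd:
  assumes ls: "ladder_system s" and \<alpha>: "\<alpha> \<in> L_set"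
  shows "closedin (ladder_topology s) (ladder_nbhd s \<alpha> N)"
  unfolding closedin_def openin_ladder_topology topspace_ladder_topology
proof (intro conjI ballI)
  fix \<beta> assume "\<beta> \<in> (UNIV - ladder_nbhd s \<alpha> N) \<inter> L_set"
  then have \<beta>: "\<beta> \<in> L_set" "\<beta> \<noteq> \<alpha>"
    by (auto simp: ladder_nbhd_def)
  show "eventually (\<lambda>n. s \<beta> n \<in> UNIV - ladder_nbhd s \<alpha> N) sequentially"
    using ladder_eventually_avoids[OF ls \<beta>(1) \<alpha> \<beta>(2)]
    by (rule eventually_mono) (use ladder_not_in_L_set[OF ls \<beta>(1)] \<alpha> in \<open>auto simp: ladder_nbhd_def\<close>)
qed auto

lemma compactin_ladder_finite_limits:
  assumes ls: "ladder_system s" and K: "compactin (ladder_topology s) K"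
  shows "finite (K \<inter> L_set)"
proof -
  define \<U> where "\<U> = (\<lambda>\<alpha>. ladder_nbhd s \<alpha> 0) ` L_set \<union> (\<lambda>x. {x}) ` S_set"
  have "openin (ladder_topology s) {x}" if "x \<in> S_set" for x
    using that by (auto simp: openin_ladder_topology S_set_def)
  then have "\<forall>U\<in>\<U>. openin (ladder_topology s) U"
    by (auto simp: \<U>_def openin_ladder_nbhd[OF ls])
  moreover have "K \<subseteq> \<Union>\<U>"
    by (auto simp: \<U>_def ladder_nbhd_def S_set_def)
  ultimately obtain \<F> where \<F>: "finite \<F>" "\<F> \<subseteq> \<U>" "K \<subseteq> \<Union>\<F>"
    using K unfolding compactin_def by meson
  have "finite (U \<inter> L_set)" if "U \<in> \<U>" for U
    using that ladder_nbhd_Int_L_set[OF ls] by (auto simp: \<U>_def)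
  with \<F> have "finite (\<Union>U\<in>\<F>. U \<inter> L_set)"
    by blast
  moreover have "K \<inter> L_set \<subseteq> (\<Union>U\<in>\<F>. U \<inter> L_set)"
    using \<F>(3) by blast
  ultimately show ?thesis
    by (rule finite_subset[rotated])
qed

definition collapse_map :: "'i set \<Rightarrow> ('i \<Rightarrow> 'a set) \<Rightarrow> ('i \<Rightarrow> 'b) \<Rightarrow> 'a option \<Rightarrow> 'b option" where
  "collapse_map I D g y = (case y of None \<Rightarrow> None
     | Some x \<Rightarrow> if \<exists>i\<in>I. x \<in> D i then Some (g (THE i. i \<in> I \<and> x \<in> D i)) else None)"

lemma collapse_map_None [simp]: "collapse_map I D g None = None"
  by (simp add: collapse_map_def)

lemma collapse_map_in:
  assumes "disjoint_family_on D I" "i \<in> I" "x \<in> D i"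
  shows "collapse_map I D g (Some x) = Some (g i)"
proof -
  have "(THE i. i \<in> I \<and> x \<in> D i) = i"
    using assms by (auto simp: disjoint_family_on_def)
  with assms show ?thesis
    by (auto simp: collapse_map_def)
qed

lemma collapse_map_outside:
  "(\<forall>i\<in>I. x \<notin> D i) \<Longrightarrow> collapse_map I D g (Some x) = None"
  by (simp add: collapse_map_def)

lemma collapse_map_range:
  assumes "disjoint_family_on D I"
  shows "collapse_map I D g y \<in> insert None (Some ` g ` I)"
proof (cases y)
  case (Some x)
  show ?thesis
  proof (cases "\<exists>i\<in>I. x \<in> D i")
    case True
    then obtain i where "i \<in> I" "x \<in> D i"
      by blast
    with Some show ?thesis
      by (simp add: collapse_map_in[OF assms])
  qed (simp add: Some collapse_map_outside)
qed simp

lemma collapse_map_Some_in_image: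
  assumes disj: "disjoint_family_on D I"
  shows "collapse_map I D g (Some x) \<in> Some ` U \<longleftrightarrow> x \<in> (\<Union>i\<in>{i\<in>I. g i \<in> U}. D i)"
proof (cases "\<exists>i\<in>I. x \<in> D i")
  case True
  then obtain i where i: "i \<in> I" "x \<in> D i"
    by blast
  have "j = i" if "j \<in> I" "x \<in> D j" for j
    using disj i that unfolding disjoint_family_on_def by blast
  then have "x \<in> (\<Union>i\<in>{i\<in>I. g i \<in> U}. D i) \<longleftrightarrow> g i \<in> U"
    using i by blast
  with collapse_map_in[OF disj i] show ?thesis
    by auto
next
  case False
  then show ?thesis
    by (simp add: collapse_map_outside)
qed

lemma continuous_map_collapse_map:
  assumes disj: "disjoint_family_on D I"
    and D: "\<And>i. i \<in> I \<Longrightarrow> openin X (D i) \<and> closedin X (D i) \<and> compactin X (D i)"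
    and g: "g ` I \<subseteq> topspace Y"
    and fin: "\<And>K. compactin Y K \<Longrightarrow> closedin Y K \<Longrightarrow> finite {i\<in>I. g i \<in> K}"
  shows "continuous_map (Alexandroff_compactification X) (Alexandroff_compactification Y)
           (collapse_map I D g)"
proof -
  let ?\<phi> = "collapse_map I D g"
  define W where "W U = (\<Union>i\<in>{i\<in>I. g i \<in> U}. D i)" for U
  have "D i \<subseteq> topspace X" if "i \<in> I" for i
    using D[OF that] openin_subset by blast
  then have W_sub: "W U \<subseteq> topspace X" for U
    unfolding W_def by blast
  have into: "?\<phi> y \<in> insert None (Some ` topspace Y)" for y
    using collapse_map_range[OF disj] g by blast
  have Some_in_image: "?\<phi> (Some x) \<in> Some ` U \<longleftrightarrow> x \<in> W U" for x U
    unfolding W_def by (rule collapse_map_Some_in_image[OF disj])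
  show ?thesis
    unfolding continuous_map_def
  proof (intro conjI allI impI)
    show "?\<phi> \<in> topspace (Alexandroff_compactification X) \<rightarrow> topspace (Alexandroff_compactification Y)"
      using into by simp
  next
    fix V assume "openin (Alexandroff_compactification Y) V"
    then consider U where "openin Y U" "V = Some ` U"
      | K where "compactin Y K" "closedin Y K" "V = insert None (Some ` (topspace Y - K))"
      unfolding openin_Alexandroff_compactification by blast
    then show "openin (Alexandroff_compactification X)
                 {y \<in> topspace (Alexandroff_compactification X). ?\<phi> y \<in> V}"
    proof cases
      case 1
      have "?\<phi> y \<in> V \<longleftrightarrow> y \<in> Some ` W U" for y
        using 1(2) by (cases y) (auto simp: Some_in_image)
      then have "{y \<in> topspace (Alexandroff_compactification X). ?\<phi> y \<in> V} = Some ` W U"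
        using W_sub by auto
      moreover have "openin X (W U)"
        using D unfolding W_def by blast
      ultimately show ?thesis
        by simp
    next
      case 2
      have "?\<phi> (Some x) \<in> V \<longleftrightarrow> x \<notin> W K" for x
        using into[of "Some x"] Some_in_image[of x K] 2(3) by (cases "?\<phi> (Some x)") auto
      then have "{y \<in> topspace (Alexandroff_compactification X). ?\<phi> y \<in> V}
                   = insert None (Some ` (topspace X - W K))"
        by (auto simp: 2(3))
      moreover have "compactin X (W K)" "closedin X (W K)"
        using fin[OF 2(1,2)] D unfolding W_def by (auto intro!: compactin_Union closedin_Union)
      ultimately show ?thesis
        unfolding openin_Alexandroff_compactification by blast
    qed
  qed
qed

lemma countable_disjoint_ladder_tails:
  assumes ls: "ladder_system s" and B: "B \<subseteq> L_set" "countable B"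
  shows "\<exists>N. disjoint_family_on (\<lambda>\<alpha>. s \<alpha> ` {N \<alpha>..}) B"
proof -
  obtain e :: "'a \<Rightarrow> nat" where e: "inj_on e B"
    using B(2) unfolding countable_def by blast
  have "\<exists>M. \<forall>n\<ge>M. \<forall>\<beta>\<in>B \<inter> e -` {..<e \<alpha>}. s \<alpha> n \<notin> range (s \<beta>)" if "\<alpha> \<in> B" for \<alpha>
  proof -
    have "finite (B \<inter> e -` {..<e \<alpha>})"
      using finite_vimage_IntI[OF _ e] by (simp add: Int_commute)
    moreover have "\<forall>\<beta>\<in>B \<inter> e -` {..<e \<alpha>}. eventually (\<lambda>n. s \<alpha> n \<notin> range (s \<beta>)) sequentially"
      using that B(1) by (auto intro!: ladder_eventually_avoids[OF ls])
    ultimately show ?thesis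
      unfolding eventually_sequentially[symmetric] by (rule eventually_ball_finite)
  qed
  then obtain N where N: "\<And>\<alpha> \<beta> n. \<alpha> \<in> B \<Longrightarrow> \<beta> \<in> B \<Longrightarrow> e \<beta> < e \<alpha> \<Longrightarrow> N \<alpha> \<le> n \<Longrightarrow> s \<alpha> n \<notin> range (s \<beta>)"
    by (metis IntI lessThan_iff vimageI)
  have "s \<alpha> ` {N \<alpha>..} \<inter> s \<beta> ` {N \<beta>..} = {}" if "\<alpha> \<in> B" "\<beta> \<in> B" "e \<beta> < e \<alpha>" for \<alpha> \<beta>
    using N[OF that] by blast
  moreover have "e \<alpha> \<noteq> e \<beta>" if "\<alpha> \<in> B" "\<beta> \<in> B" "\<alpha> \<noteq> \<beta>" for \<alpha> \<beta>
    using e that by (meson inj_on_contraD)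
  ultimately have "disjoint_family_on (\<lambda>\<alpha>. s \<alpha> ` {N \<alpha>..}) B"
    unfolding disjoint_family_on_def by (metis Int_commute linorder_neqE_nat)
  then show ?thesis by blast
qed

definition next_club :: "'a::wellorder set \<Rightarrow> 'a \<Rightarrow> 'a" where
  "next_club C \<alpha> = (LEAST \<gamma>. \<gamma> \<in> C \<and> \<alpha> \<le> \<gamma>)"

lemma next_club:
  assumes "club C"
  shows "next_club C \<alpha> \<in> C" "\<alpha> \<le> next_club C \<alpha>"
proof -
  obtain \<gamma> where "\<gamma> \<in> C" "\<alpha> \<le> \<gamma>"
    using assms unfolding club_def by blast
  then show "next_club C \<alpha> \<in> C" "\<alpha> \<le> next_club C \<alpha>"
    unfolding next_club_def by (metis (mono_tags, lifting) LeastI)+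
qed

lemma next_club_least: "\<gamma> \<in> C \<Longrightarrow> \<alpha> \<le> \<gamma> \<Longrightarrow> next_club C \<alpha> \<le> \<gamma>"
  unfolding next_club_def by (simp add: Least_le)

lemma next_club_less_of_neq:
  assumes "club C" "\<alpha> \<le> \<beta>" "next_club C \<alpha> \<noteq> next_club C \<beta>"
  shows "next_club C \<alpha> < \<beta>"
proof (rule ccontr)
  assume "\<not> next_club C \<alpha> < \<beta>"
  then have "next_club C \<beta> \<le> next_club C \<alpha>"
    using next_club[OF assms(1)] by (simp add: next_club_least)
  moreover have "next_club C \<alpha> \<le> next_club C \<beta>"
    using next_club[OF assms(1)] assms(2) by (meson next_club_least order_trans)
  ultimately show False
    using assms(3) by simp
qed

lemma club_bounded_below_nonmember:
  assumes "club C" "\<alpha> \<in> L_set" "\<alpha> \<notin> C"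
  shows "\<exists>\<delta><\<alpha>. \<forall>\<gamma>\<in>C. \<gamma> < \<alpha> \<longrightarrow> \<gamma> \<le> \<delta>"
proof -
  have "limit_ord \<alpha>"
    using assms(2) unfolding L_set_def by simp
  with assms(1,3) obtain \<delta> where "\<delta> < \<alpha>" "\<forall>\<gamma>\<in>C. \<not> (\<delta> < \<gamma> \<and> \<gamma> < \<alpha>)"
    unfolding club_def by blast
  then show ?thesis
    by (meson not_le)
qed

lemma block_disjoint_ladder_tails:
  assumes ls: "ladder_system s" and A: "A \<subseteq> L_set"
    and blocks: "\<And>c. countable {\<beta>\<in>A. \<kappa> \<beta> = c}"
    and \<delta>: "\<And>\<alpha>. \<alpha> \<in> A \<Longrightarrow> \<delta> \<alpha> < \<alpha>"
    and separated: "\<And>\<alpha> \<beta>. \<alpha> \<in> A \<Longrightarrow> \<beta> \<in> A \<Longrightarrow> \<alpha> < \<beta> \<Longrightarrow> \<kappa> \<alpha> \<noteq> \<kappa> \<beta> \<Longrightarrow> \<alpha> \<le> \<delta> \<beta>"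
  shows "\<exists>N. disjoint_family_on (\<lambda>\<alpha>. s \<alpha> ` {N \<alpha>..}) A"
proof -
  have "\<forall>c. \<exists>N. disjoint_family_on (\<lambda>\<alpha>. s \<alpha> ` {N \<alpha>..}) {\<beta>\<in>A. \<kappa> \<beta> = c}"
    by (intro allI countable_disjoint_ladder_tails[OF ls _ blocks]) (use A in auto)
  then obtain N\<^sub>b where N\<^sub>b: "\<And>c. disjoint_family_on (\<lambda>\<alpha>. s \<alpha> ` {N\<^sub>b c \<alpha>..}) {\<beta>\<in>A. \<kappa> \<beta> = c}"
    by (auto dest!: choice)
  have "\<forall>\<alpha>\<in>A. \<exists>M. \<forall>n\<ge>M. \<delta> \<alpha> < s \<alpha> n"
  proof
    fix \<alpha> assume "\<alpha> \<in> A"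
    with A \<delta> have "eventually (\<lambda>n. \<delta> \<alpha> < s \<alpha> n) sequentially"
      by (intro ladder_eventually_above[OF ls]) auto
    then show "\<exists>M. \<forall>n\<ge>M. \<delta> \<alpha> < s \<alpha> n"
      unfolding eventually_sequentially .
  qed
  then obtain M where M: "\<forall>\<alpha>\<in>A. \<forall>n\<ge>M \<alpha>. \<delta> \<alpha> < s \<alpha> n"
    by (auto dest!: bchoice)
  define N where "N \<alpha> = max (N\<^sub>b (\<kappa> \<alpha>) \<alpha>) (M \<alpha>)" for \<alpha>
  have "s \<alpha> ` {N \<alpha>..} \<inter> s \<beta> ` {N \<beta>..} = {}" if \<alpha>\<beta>: "\<alpha> \<in> A" "\<beta> \<in> A" "\<alpha> < \<beta>" for \<alpha> \<beta>
  proof (cases "\<kappa> \<alpha> = \<kappa> \<beta>")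
    case True
    let ?B = "{\<gamma>\<in>A. \<kappa> \<gamma> = \<kappa> \<alpha>}"
    have "\<alpha> \<in> ?B" "\<beta> \<in> ?B" "\<alpha> \<noteq> \<beta>"
      using \<alpha>\<beta> True by auto
    then have "s \<alpha> ` {N\<^sub>b (\<kappa> \<alpha>) \<alpha>..} \<inter> s \<beta> ` {N\<^sub>b (\<kappa> \<alpha>) \<beta>..} = {}"
      using N\<^sub>b[of "\<kappa> \<alpha>"] unfolding disjoint_family_on_def by blast
    moreover have tail_sub: "s \<gamma> ` {N \<gamma>..} \<subseteq> s \<gamma> ` {N\<^sub>b (\<kappa> \<alpha>) \<gamma>..}"
      if "\<kappa> \<gamma> = \<kappa> \<alpha>" for \<gamma>
      using that unfolding N_def by auto
    ultimately show ?thesis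
      using tail_sub[OF refl] tail_sub[OF True[symmetric]] by blast
  next
    case False
    have "s \<alpha> n < s \<beta> m" if "N \<beta> \<le> m" for n m
    proof -
      have "s \<alpha> n < \<alpha>"
        using ladder_systemD(3)[OF ls] \<alpha>\<beta>(1) A by blast
      also have "\<alpha> \<le> \<delta> \<beta>"
        using separated[OF \<alpha>\<beta> False] .
      also have "\<delta> \<beta> < s \<beta> m"
        using M \<alpha>\<beta>(2) that unfolding N_def by simp
      finally show ?thesis .
    qed
    then show ?thesis
      by (auto dest: less_imp_neq)
  qed
  then have "disjoint_family_on (\<lambda>\<alpha>. s \<alpha> ` {N \<alpha>..}) A"
    unfolding disjoint_family_on_def by (metis Int_commute neqE)
  then show ?thesis by blast
qed

lemma nonstationary_disjoint_ladder_tails: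
  assumes \<omega>\<^sub>1: "omega1_type TYPE('a::wellorder)" and ls: "ladder_system s"
    and A: "A \<subseteq> L_set" "nonstationary A"
  shows "\<exists>N. disjoint_family_on (\<lambda>\<alpha>::'a. s \<alpha> ` {N \<alpha>..}) A"
proof -
  obtain C where C: "club C" "A \<inter> C = {}"
    using A(2) unfolding nonstationary_def by blast
  let ?\<kappa> = "next_club C"
  have below_\<kappa>: "\<alpha> < ?\<kappa> \<alpha>" if "\<alpha> \<in> A" for \<alpha>
  proof -
    have "\<alpha> \<notin> C"
      using C(2) that by auto
    then have "\<alpha> \<noteq> ?\<kappa> \<alpha>"
      using next_club(1)[OF C(1), of \<alpha>] by metis
    then show ?thesis
      using next_club(2)[OF C(1)] by (simp add: order.strict_iff_order)
  qed
  have "\<forall>\<alpha>\<in>A. \<exists>\<delta><\<alpha>. \<forall>\<gamma>\<in>C. \<gamma> < \<alpha> \<longrightarrow> \<gamma> \<le> \<delta>"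
    by (intro ballI club_bounded_below_nonmember[OF C(1)]) (use A(1) C(2) in auto)
  then obtain \<delta> where \<delta>: "\<forall>\<alpha>\<in>A. \<delta> \<alpha> < \<alpha> \<and> (\<forall>\<gamma>\<in>C. \<gamma> < \<alpha> \<longrightarrow> \<gamma> \<le> \<delta> \<alpha>)"
    by (auto dest!: bchoice)
  show ?thesis
  proof (rule block_disjoint_ladder_tails[OF ls A(1)])
    show "countable {\<beta>\<in>A. ?\<kappa> \<beta> = c}" for c
    proof (rule countable_subset)
      show "{\<beta>\<in>A. ?\<kappa> \<beta> = c} \<subseteq> {\<beta>. \<beta> < c}"
        using below_\<kappa> by auto
      show "countable {\<beta>. \<beta> < c}"
        using \<omega>\<^sub>1 unfolding omega1_type_def by blast
    qed
    show "\<delta> \<alpha> < \<alpha>" if "\<alpha> \<in> A" for \<alpha>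
      using \<delta> that by blast
    show "\<alpha> \<le> \<delta> \<beta>" if "\<alpha> \<in> A" "\<beta> \<in> A" "\<alpha> < \<beta>" "?\<kappa> \<alpha> \<noteq> ?\<kappa> \<beta>" for \<alpha> \<beta>
    proof -
      have "\<alpha> \<le> ?\<kappa> \<alpha>"
        by (rule next_club(2)[OF C(1)])
      also have "?\<kappa> \<alpha> \<le> \<delta> \<beta>"
        using \<delta> that next_club(1)[OF C(1)] next_club_less_of_neq[OF C(1) _ that(4)] by simp
      finally show ?thesis .
    qed
  qed
qed

lemma disjoint_family_on_ladder_nbhd:
  assumes ls: "ladder_system s" and "A \<subseteq> L_set"
    and "disjoint_family_on (\<lambda>\<alpha>. s \<alpha> ` {N \<alpha>..}) A"
  shows "disjoint_family_on (\<lambda>\<alpha>. ladder_nbhd s \<alpha> (N \<alpha>)) A"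
  using assms ladder_not_in_L_set[OF ls]
  unfolding disjoint_family_on_def ladder_nbhd_def by (fastforce simp: subset_iff)

lemma finite_inj_preimage_compactin_ladder:
  assumes "ladder_system s" "compactin (ladder_topology s) K" "\<xi> ` A \<subseteq> L_set" "inj_on \<xi> A"
  shows "finite {\<alpha>\<in>A. \<xi> \<alpha> \<in> K}"
proof (rule finite_imageD)
  have "\<xi> ` {\<alpha>\<in>A. \<xi> \<alpha> \<in> K} \<subseteq> K \<inter> L_set"
    using assms(3) by blast
  then show "finite (\<xi> ` {\<alpha>\<in>A. \<xi> \<alpha> \<in> K})"
    using compactin_ladder_finite_limits[OF assms(1,2)] by (rule finite_subset)
  show "inj_on \<xi> {\<alpha>\<in>A. \<xi> \<alpha> \<in> K}"
    using assms(4) by (rule inj_on_subset) blast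
qed

theorem theorem3:
  fixes s :: "'a::wellorder \<Rightarrow> nat \<Rightarrow> 'a"
    and A :: "'a set"
    and \<xi> :: "'a \<Rightarrow> 'a"
  assumes "omega1_type TYPE('a)"
    and "ladder_system s"
    and "A \<subseteq> L_set"
    and "nonstationary A"
    and "\<xi> ` A \<subseteq> L_set"
    and "inj_on \<xi> A"
  shows "\<exists>\<phi> :: 'a option \<Rightarrow> 'a option.
           continuous_map (ladder_space s) (ladder_space s) \<phi> \<and>
           (\<forall>\<alpha>\<in>A. \<phi> (Some \<alpha>) = Some (\<xi> \<alpha>)) \<and>
           \<phi> None = None \<and>
           (\<forall>\<alpha>\<in>L_set - A. \<phi> (Some \<alpha>) = None)"
proof -
  obtain N where "disjoint_family_on (\<lambda>\<alpha>. s \<alpha> ` {N \<alpha>..}) A"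
    using nonstationary_disjoint_ladder_tails assms(1-4) by blast
  then have disj: "disjoint_family_on (\<lambda>\<alpha>. ladder_nbhd s \<alpha> (N \<alpha>)) A"
    by (rule disjoint_family_on_ladder_nbhd[OF assms(2,3)])
  let ?\<phi> = "collapse_map A (\<lambda>\<alpha>. ladder_nbhd s \<alpha> (N \<alpha>)) \<xi>"
  have "continuous_map (ladder_space s) (ladder_space s) ?\<phi>"
    unfolding ladder_space_def one_point_compactification_eq_Alexandroff
  proof (rule continuous_map_collapse_map[OF disj])
    fix \<alpha> assume "\<alpha> \<in> A"
    with assms(2,3) show "openin (ladder_topology s) (ladder_nbhd s \<alpha> (N \<alpha>)) \<and>
        closedin (ladder_topology s) (ladder_nbhd s \<alpha> (N \<alpha>)) \<and>
        compactin (ladder_topology s) (ladder_nbhd s \<alpha> (N \<alpha>))"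
      by (blast intro: openin_ladder_nbhd closedin_ladder_nbhd compactin_ladder_nbhd)
  next
    show "\<xi> ` A \<subseteq> topspace (ladder_topology s)"
      by simp
  next
    fix K assume "compactin (ladder_topology s) K"
    then show "finite {\<alpha>\<in>A. \<xi> \<alpha> \<in> K}"
      by (rule finite_inj_preimage_compactin_ladder[OF assms(2) _ assms(5,6)])
  qed
  moreover have "?\<phi> (Some \<alpha>) = Some (\<xi> \<alpha>)" if "\<alpha> \<in> A" for \<alpha>
    by (rule collapse_map_in[OF disj that]) (simp add: ladder_nbhd_def)
  moreover have "?\<phi> (Some \<alpha>) = None" if "\<alpha> \<in> L_set - A" for \<alpha>
  proof (rule collapse_map_outside, intro ballI)
    fix \<beta> assume "\<beta> \<in> A"
    with assms(3) have "ladder_nbhd s \<beta> (N \<beta>) \<inter> L_set = {\<beta>}"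
      by (intro ladder_nbhd_Int_L_set[OF assms(2)]) blast
    with that \<open>\<beta> \<in> A\<close> show "\<alpha> \<notin> ladder_nbhd s \<beta> (N \<beta>)"
      by auto
  qed
  ultimately show ?thesis
    by auto
qed

end
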